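(* Let $\mathcal{C}$ be any class of connected graphs, and for each positive integer $n$ let $\mathcal{C}_n$ denote the set of isomorphism classes of $n$-vertex graphs in $\mathcal{C}$. Then $\mathcal{C}$ has local complexity at most $\log(|\mathcal{C}_n|)+O(\log n)$. In particular, if $\mathcal{C}$ is tiny (i.e., there is a constant $c>0$ with $|\mathcal{C}_n|\le c^n$ for all $n$), then the local complexity of $\mathcal{C}$ is $O(n)$.
   Context: All graphs are finite, simple, undirected and connected; logarithms are binary. The vertices of an $n$-vertex graph $G$ carry distinct identifiers from $\{1,\dots,\mathrm{poly}(n)\}$. A proof for $G$ is a map $P:V(G)\to\{0,1\}^*$ (it may depend on the identifiers); its size is the maximum length of a certificate $P(v)$. A prover for a class $\mathcal{G}$ maps each $G\in\mathcal{G}$ to a proof for $G$. A verifier $\mathcal{A}$ maps $(G,P,v)$ to $\{0,1\}$ ($v$ accepts if the output is 1); it is local if the output of $v$ depends only on the identifiers and certificates of the vertices in the closed neighborhood $N[v]$ (optionally also on the graph induced by $N[v]$). A proof labeling scheme for $\mathcal{G}$ is a prover–local verifier pair such that: if $G\in\mathcal{G}$, every vertex accepts the prover's proof; if $G\notin\mathcal{G}$, for every proof some vertex rejects. Its complexity is the maximum size of a proof assigned by the prover to an $n$-vertex graph of $\mathcal{G}$, as a function of $n$; the local complexity of $\mathcal{G}$ is the minimum complexity of a proof labeling scheme for $\mathcal{G}$. *)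

theory Defs
  imports Complex_Main
begin

text \<open>An identified graph: the vertices are their (distinct) identifiers, natural numbers.
  A graph is a pair (V, E) with E a symmetric irreflexive relation on V.\<close>
type_synonym graph = "nat set \<times> (nat \<times> nat) set"

definition is_graph :: "graph \<Rightarrow> bool" where
  "is_graph G \<longleftrightarrow> finite (fst G) \<and> fst G \<noteq> {} \<and> snd G \<subseteq> fst G \<times> fst G
     \<and> sym (snd G) \<and> (\<forall>v. (v, v) \<notin> snd G)"

definition connected_graph :: "graph \<Rightarrow> bool" where
  "connected_graph G \<longleftrightarrow> is_graph G \<and> (\<forall>u\<in>fst G. \<forall>v\<in>fst G. (u, v) \<in> (snd G)\<^sup>*)"

definition graph_iso :: "graph \<Rightarrow> graph \<Rightarrow> bool" where
  "graph_iso G H \<longleftrightarrow> (\<exists>f. bij_betw f (fst G) (fst H) \<and>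
      (\<forall>u\<in>fst G. \<forall>v\<in>fst G. (u, v) \<in> snd G \<longleftrightarrow> (f u, f v) \<in> snd H))"

definition graph_class :: "graph set \<Rightarrow> bool" where
  "graph_class C \<longleftrightarrow> (\<forall>G\<in>C. connected_graph G) \<and>
      (\<forall>G H. G \<in> C \<longrightarrow> is_graph H \<longrightarrow> graph_iso G H \<longrightarrow> H \<in> C)"

definition num_iso_classes :: "graph set \<Rightarrow> nat \<Rightarrow> nat" where
  "num_iso_classes C n =
     card ({G \<in> C. card (fst G) = n} // {(G, H). graph_iso G H})"

definition ids_ok :: "nat \<Rightarrow> graph \<Rightarrow> bool" where
  "ids_ok d G \<longleftrightarrow> fst G \<subseteq> {1 .. card (fst G) ^ d}"

definition closed_nbhd :: "graph \<Rightarrow> nat \<Rightarrow> nat set" where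
  "closed_nbhd G v = insert v {u. (v, u) \<in> snd G}"

type_synonym certs = "nat \<Rightarrow> bool list"
type_synonym verifier = "graph \<Rightarrow> certs \<Rightarrow> nat \<Rightarrow> bool"
type_synonym prover = "graph \<Rightarrow> certs"

definition local_verifier :: "verifier \<Rightarrow> bool" where
  "local_verifier A \<longleftrightarrow> (\<forall>G H P Q v. connected_graph G \<longrightarrow> connected_graph H \<longrightarrow>
      v \<in> fst G \<longrightarrow> v \<in> fst H \<longrightarrow> closed_nbhd G v = closed_nbhd H v \<longrightarrow>
      (\<forall>u\<in>closed_nbhd G v. P u = Q u) \<longrightarrow> A G P v = A H Q v)"

definition pls :: "nat \<Rightarrow> graph set \<Rightarrow> prover \<Rightarrow> verifier \<Rightarrow> bool" where
  "pls d C Pr A \<longleftrightarrow> local_verifier A \<and>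
     (\<forall>G. connected_graph G \<longrightarrow> ids_ok d G \<longrightarrow> G \<in> C \<longrightarrow> (\<forall>v\<in>fst G. A G (Pr G) v)) \<and>
     (\<forall>G. connected_graph G \<longrightarrow> ids_ok d G \<longrightarrow> G \<notin> C \<longrightarrow> (\<forall>P. \<exists>v\<in>fst G. \<not> A G P v))"

definition pls_size_bounded :: "nat \<Rightarrow> graph set \<Rightarrow> prover \<Rightarrow> (nat \<Rightarrow> real) \<Rightarrow> bool" where
  "pls_size_bounded d C Pr f \<longleftrightarrow>
     (\<forall>G. connected_graph G \<longrightarrow> ids_ok d G \<longrightarrow> G \<in> C \<longrightarrow>
        (\<forall>v\<in>fst G. real (length (Pr G v)) \<le> f (card (fst G))))"

definition tiny :: "graph set \<Rightarrow> bool" where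
  "tiny C \<longleftrightarrow> (\<exists>c::real. c > 0 \<and> (\<forall>n\<ge>1. real (num_iso_classes C n) \<le> c ^ n))"

end

theory Submission
  imports Defs "HOL-Library.Log_Nat"
begin

text \<open>Fix, for every isomorphism class of \<open>n\<close>-vertex graphs of \<open>C\<close>, a representative \<open>H\<close> on
  the vertex set \<open>{0..<n}\<close>. The prover labels each vertex \<open>u\<close> of \<open>G \<in> C\<close> with \<open>n\<close>, the index
  \<open>j\<close> of the class of \<open>G\<close> (about \<open>log |C_n|\<close> bits), the image \<open>g u\<close> of \<open>u\<close> under an
  isomorphism \<open>g : G \<rightarrow> H\<close>, and the identifier \<open>r\<close> of \<open>g\<^sup>-\<^sup>1 0\<close>, which has \<open>O(log n)\<close>
  bits since identifiers are polynomial in \<open>n\<close>. A vertex \<open>v\<close> checks that its neighbours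
  agree on \<open>n, j, r\<close>, that \<open>g\<close> maps its neighbourhood bijectively onto that of \<open>g v\<close> in
  \<open>H\<close>, and that \<open>v = r\<close> if \<open>g v = 0\<close>. If every vertex accepts, \<open>g\<close> is a covering map from
  \<open>G\<close> onto the connected graph \<open>H\<close> whose fibre over \<open>0\<close> is a single vertex. Walking along
  paths of \<open>H\<close> shows that all fibres of a covering have the same size, so \<open>g\<close> is an
  isomorphism and \<open>G \<in> C\<close>. For tiny classes \<open>log |C_n| = O(n)\<close>.\<close>

section \<open>Isomorphism classes and their representatives\<close>

definition iso_map :: "(nat \<Rightarrow> nat) \<Rightarrow> graph \<Rightarrow> graph \<Rightarrow> bool" where
  "iso_map f G H \<longleftrightarrow> bij_betw f (fst G) (fst H) \<and>
     (\<forall>u\<in>fst G. \<forall>w\<in>fst G. (u, w) \<in> snd G \<longleftrightarrow> (f u, f w) \<in> snd H)"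

lemma graph_iso_iff_iso_map: "graph_iso G H \<longleftrightarrow> (\<exists>f. iso_map f G H)"
  by (simp add: graph_iso_def iso_map_def)

lemma iso_map_id: "iso_map id G G"
  by (simp add: iso_map_def)

lemma iso_map_comp: "iso_map f G H \<Longrightarrow> iso_map g H K \<Longrightarrow> iso_map (g \<circ> f) G K"
  unfolding iso_map_def by (auto simp: bij_betw_trans bij_betw_apply)

lemma iso_map_inv_into:
  assumes "iso_map f G H"
  shows "iso_map (inv_into (fst G) f) H G"
proof -
  have f: "bij_betw f (fst G) (fst H)" using assms by (simp add: iso_map_def)
  have "(u, w) \<in> snd H \<longleftrightarrow> (inv_into (fst G) f u, inv_into (fst G) f w) \<in> snd G"
    if "u \<in> fst H" "w \<in> fst H" for u w
    using assms that bij_betw_inv_into_right[OF f] bij_betw_apply[OF bij_betw_inv_into[OF f]]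
    unfolding iso_map_def by metis
  then show ?thesis using bij_betw_inv_into[OF f] by (simp add: iso_map_def)
qed

lemma equiv_graph_iso: "equiv UNIV {(G, H). graph_iso G H}"
  unfolding graph_iso_iff_iso_map
  by (intro equivI refl_onI symI transI) (auto intro: iso_map_id iso_map_inv_into iso_map_comp)

lemma graph_iso_sym: "graph_iso G H \<Longrightarrow> graph_iso H G"
  using equiv_graph_iso by (auto elim: equivE symE)

lemma iso_map_image_graph:
  assumes G: "is_graph G" and f: "inj_on f (fst G)"
  shows "is_graph (f ` fst G, map_prod f f ` snd G) \<and> iso_map f G (f ` fst G, map_prod f f ` snd G)"
proof -
  have E: "snd G \<subseteq> fst G \<times> fst G" using G by (simp add: is_graph_def)
  have edge_iff: "(f u, f w) \<in> map_prod f f ` snd G \<longleftrightarrow> (u, w) \<in> snd G"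
    if "u \<in> fst G" "w \<in> fst G" for u w
  proof
    assume "(f u, f w) \<in> map_prod f f ` snd G"
    then obtain a b where "(a, b) \<in> snd G" "f a = f u" "f b = f w" by auto
    with that E f show "(u, w) \<in> snd G" by (auto dest: inj_onD)
  qed auto
  have "(v, v) \<notin> map_prod f f ` snd G" for v
    using G E f by (auto simp: is_graph_def dest: inj_onD)
  with G E have "is_graph (f ` fst G, map_prod f f ` snd G)"
    by (auto simp: is_graph_def sym_def)
  moreover have "iso_map f G (f ` fst G, map_prod f f ` snd G)"
    using f edge_iff by (simp add: iso_map_def inj_on_imp_bij_betw)
  ultimately show ?thesis ..
qed

lemma ex_graph_iso_standard:
  assumes "is_graph G"
  shows "\<exists>H. is_graph H \<and> fst H = {0..<card (fst G)} \<and> graph_iso G H"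
proof -
  have "finite (fst G)" using assms by (simp add: is_graph_def)
  then obtain f where f: "bij_betw f (fst G) {0..<card (fst G)}"
    using ex_bij_betw_finite_nat by blast
  moreover have "is_graph (f ` fst G, map_prod f f ` snd G) \<and> iso_map f G (f ` fst G, map_prod f f ` snd G)"
    using iso_map_image_graph[OF assms] f by (metis bij_betw_def)
  ultimately show ?thesis
    unfolding graph_iso_iff_iso_map bij_betw_def by (intro exI[of _ "(f ` fst G, map_prod f f ` snd G)"]) auto
qed

lemma graph_class_connected: "graph_class C \<Longrightarrow> G \<in> C \<Longrightarrow> connected_graph G"
  by (simp add: graph_class_def)

lemma graph_class_is_graph: "graph_class C \<Longrightarrow> G \<in> C \<Longrightarrow> is_graph G"
  by (simp add: graph_class_def connected_graph_def)

lemma graph_class_iso_closed: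
  "graph_class C \<Longrightarrow> G \<in> C \<Longrightarrow> is_graph H \<Longrightarrow> graph_iso G H \<Longrightarrow> H \<in> C"
  unfolding graph_class_def by blast

lemma card_vertices_pos: "is_graph G \<Longrightarrow> 0 < card (fst G)"
  by (simp add: is_graph_def card_gt_0_iff)

definition iso_classes :: "graph set \<Rightarrow> nat \<Rightarrow> graph set set" where
  "iso_classes C n = {G \<in> C. card (fst G) = n} // {(G, H). graph_iso G H}"

lemma card_iso_classes: "card (iso_classes C n) = num_iso_classes C n"
  by (simp add: iso_classes_def num_iso_classes_def)

lemma iso_class_of: "{(G, H). graph_iso G H} `` {G} = {H. graph_iso G H}"
  by auto

lemma iso_classes_standard_member:
  assumes C: "graph_class C" and X: "X \<in> iso_classes C n"
  shows "\<exists>H\<in>X \<inter> C. fst H = {0..<n} \<and> X = {H'. graph_iso H H'}"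
proof -
  obtain G where G: "G \<in> C" "card (fst G) = n" and XG: "X = {H. graph_iso G H}"
    using X by (auto simp: iso_classes_def elim!: quotientE)
  obtain H where H: "is_graph H" "fst H = {0..<n}" "graph_iso G H"
    using ex_graph_iso_standard graph_class_is_graph[OF C G(1)] G(2) by blast
  have "H \<in> C" using graph_class_iso_closed[OF C G(1) H(1,3)] .
  moreover have "X = {H'. graph_iso H H'}"
    using equiv_class_eq[OF equiv_graph_iso, of G H] H XG by (simp add: iso_class_of)
  ultimately show ?thesis using H XG by blast
qed

lemma finite_iso_classes:
  assumes "graph_class C"
  shows "finite (iso_classes C n)"
proof (rule finite_subset)
  show "iso_classes C n \<subseteq> (\<lambda>H. {H'. graph_iso H H'}) ` ({{0..<n}} \<times> Pow ({0..<n} \<times> {0..<n}))"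
  proof
    fix X assume "X \<in> iso_classes C n"
    then obtain H where H: "H \<in> C" "fst H = {0..<n}" "X = {H'. graph_iso H H'}"
      using iso_classes_standard_member assms by blast
    have "snd H \<subseteq> {0..<n} \<times> {0..<n}"
      using graph_class_is_graph[OF assms H(1)] H(2) by (simp add: is_graph_def)
    with H show "X \<in> (\<lambda>H. {H'. graph_iso H H'}) ` ({{0..<n}} \<times> Pow ({0..<n} \<times> {0..<n}))"
      by (intro image_eqI[of _ _ H]) (auto simp: mem_Times_iff)
  qed
qed simp

definition class_enum :: "graph set \<Rightarrow> nat \<Rightarrow> nat \<Rightarrow> graph set" where
  "class_enum C n = (SOME e. bij_betw e {0..<num_iso_classes C n} (iso_classes C n))"

definition class_rep :: "graph set \<Rightarrow> nat \<Rightarrow> nat \<Rightarrow> graph" where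
  "class_rep C n j = (SOME H. H \<in> class_enum C n j \<inter> C \<and> fst H = {0..<n})"

lemma bij_betw_class_enum:
  assumes "graph_class C"
  shows "bij_betw (class_enum C n) {0..<num_iso_classes C n} (iso_classes C n)"
proof -
  have "\<exists>e. bij_betw e {0..<num_iso_classes C n} (iso_classes C n)"
    using ex_bij_betw_nat_finite[OF finite_iso_classes[OF assms]] by (simp add: card_iso_classes)
  then show ?thesis unfolding class_enum_def by (rule someI_ex)
qed

lemma class_rep:
  assumes C: "graph_class C" and j: "j < num_iso_classes C n"
  shows "class_rep C n j \<in> class_enum C n j \<inter> C" and "fst (class_rep C n j) = {0..<n}"
proof -
  have "class_enum C n j \<in> iso_classes C n"
    using bij_betw_apply[OF bij_betw_class_enum[OF C]] j by simp
  then have "\<exists>H. H \<in> class_enum C n j \<inter> C \<and> fst H = {0..<n}"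
    using iso_classes_standard_member[OF C] by blast
  then have "class_rep C n j \<in> class_enum C n j \<inter> C \<and> fst (class_rep C n j) = {0..<n}"
    unfolding class_rep_def by (rule someI_ex)
  then show "class_rep C n j \<in> class_enum C n j \<inter> C" and "fst (class_rep C n j) = {0..<n}"
    by blast+
qed

lemma ex_graph_iso_class_rep:
  assumes C: "graph_class C" and G: "G \<in> C"
  shows "\<exists>j < num_iso_classes C (card (fst G)). graph_iso G (class_rep C (card (fst G)) j)"
proof -
  let ?n = "card (fst G)"
  have "{H. graph_iso G H} \<in> iso_classes C ?n"
    unfolding iso_classes_def iso_class_of[symmetric] using G by (intro quotientI) simp
  then have "{H. graph_iso G H} \<in> class_enum C ?n ` {0..<num_iso_classes C ?n}"
    using bij_betw_imp_surj_on[OF bij_betw_class_enum[OF C]] by blast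
  then obtain j where j: "j < num_iso_classes C ?n" "class_enum C ?n j = {H. graph_iso G H}"
    by auto
  then show ?thesis using class_rep(1)[OF C j(1)] by auto
qed

lemma num_iso_classes_pos: "graph_class C \<Longrightarrow> G \<in> C \<Longrightarrow> 0 < num_iso_classes C (card (fst G))"
  using ex_graph_iso_class_rep by fastforce

section \<open>Coverings of graphs\<close>

definition nbrs :: "graph \<Rightarrow> nat \<Rightarrow> nat set" where
  "nbrs G u = {w. (u, w) \<in> snd G}"

lemma nbrs_subset: "is_graph G \<Longrightarrow> nbrs G u \<subseteq> fst G"
  by (auto simp: nbrs_def is_graph_def)

lemma closed_nbhd_minus_self: "is_graph G \<Longrightarrow> closed_nbhd G v - {v} = nbrs G v"
  by (auto simp: closed_nbhd_def nbrs_def is_graph_def)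

lemma closed_nbhd_subset: "is_graph G \<Longrightarrow> v \<in> fst G \<Longrightarrow> closed_nbhd G v \<subseteq> fst G"
  by (auto simp: closed_nbhd_def is_graph_def)

lemma connected_graph_const:
  assumes G: "connected_graph G" and h: "\<And>u w. (u, w) \<in> snd G \<Longrightarrow> h w = h u"
    and "u \<in> fst G" "w \<in> fst G"
  shows "h w = h u"
proof -
  have "(u, w) \<in> (snd G)\<^sup>*" using G assms(3,4) by (simp add: connected_graph_def)
  then show ?thesis by induction (auto dest: h)
qed

definition graph_covering :: "(nat \<Rightarrow> nat) \<Rightarrow> graph \<Rightarrow> graph \<Rightarrow> bool" where
  "graph_covering f G H \<longleftrightarrow> f ` fst G \<subseteq> fst H \<and>
     (\<forall>u\<in>fst G. bij_betw f (nbrs G u) (nbrs H (f u)))"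

lemma iso_map_imp_graph_covering:
  assumes G: "is_graph G" and H: "is_graph H" and f: "iso_map f G H"
  shows "graph_covering f G H"
  unfolding graph_covering_def
proof (intro conjI ballI)
  have bij: "bij_betw f (fst G) (fst H)" using f by (simp add: iso_map_def)
  then show "f ` fst G \<subseteq> fst H" by (simp add: bij_betw_def)
  fix u assume u: "u \<in> fst G"
  have edge: "(u, w) \<in> snd G \<longleftrightarrow> (f u, f w) \<in> snd H" if "w \<in> fst G" for w
    using f u that by (simp add: iso_map_def)
  have "nbrs H (f u) \<subseteq> f ` nbrs G u"
  proof
    fix q assume q: "q \<in> nbrs H (f u)"
    then have "q \<in> f ` fst G" using nbrs_subset[OF H] bij by (auto simp: bij_betw_def)
    then obtain w where "w \<in> fst G" "q = f w" by blast
    with q edge show "q \<in> f ` nbrs G u" by (auto simp: nbrs_def)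
  qed
  moreover have "f ` nbrs G u \<subseteq> nbrs H (f u)"
    using edge nbrs_subset[OF G] by (auto simp: nbrs_def)
  moreover have "inj_on f (nbrs G u)"
    using bij nbrs_subset[OF G] by (auto simp: bij_betw_def intro: inj_on_subset)
  ultimately show "bij_betw f (nbrs G u) (nbrs H (f u))" by (auto simp: bij_betw_def)
qed

lemma graph_covering_surj:
  assumes G: "is_graph G" and H: "connected_graph H" and f: "graph_covering f G H"
    and u0: "u0 \<in> fst G"
  shows "f ` fst G = fst H"
proof
  show "f ` fst G \<subseteq> fst H" using f by (simp add: graph_covering_def)
  show "fst H \<subseteq> f ` fst G"
  proof
    fix q assume "q \<in> fst H"
    moreover have "f u0 \<in> fst H" using f u0 by (auto simp: graph_covering_def)
    ultimately have "(f u0, q) \<in> (snd H)\<^sup>*" using H by (simp add: connected_graph_def)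
    then show "q \<in> f ` fst G"
    proof induction
      case (step p q)
      then obtain x where x: "x \<in> fst G" "p = f x" by blast
      with step.hyps(2) f have "q \<in> f ` nbrs G x"
        by (auto simp: graph_covering_def bij_betw_def nbrs_def)
      then show ?case using nbrs_subset[OF G] by blast
    qed (use u0 in blast)
  qed
qed

lemma graph_covering_inj:
  assumes G: "is_graph G" and H: "connected_graph H" and f: "graph_covering f G H"
    and q0: "q0 \<in> fst H" and fibre: "\<And>x y. x \<in> fst G \<Longrightarrow> y \<in> fst G \<Longrightarrow> f x = q0 \<Longrightarrow> f y = q0 \<Longrightarrow> x = y"
  shows "inj_on f (fst G)"
proof -
  have lift: "\<exists>x'\<in>nbrs G x. f x' = p" if "x \<in> fst G" "(f x, p) \<in> snd H" for x p
  proof -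
    have "nbrs H (f x) = f ` nbrs G x" using f that(1) by (simp add: graph_covering_def bij_betw_def)
    moreover have "p \<in> nbrs H (f x)" using that(2) by (simp add: nbrs_def)
    ultimately show ?thesis by auto
  qed
  have "\<forall>x\<in>fst G. \<forall>y\<in>fst G. f x = q \<longrightarrow> f y = q \<longrightarrow> x = y" if "q \<in> fst H" for q
  proof -
    have "(q0, q) \<in> (snd H)\<^sup>*" using H q0 that by (simp add: connected_graph_def)
    then show ?thesis
    proof induction
      case (step p q)
      show ?case
      proof (intro ballI impI)
        fix x y assume x: "x \<in> fst G" and y: "y \<in> fst G" and "f x = q" "f y = q"
        moreover have "(q, p) \<in> snd H"
          using step.hyps(2) H by (auto simp: connected_graph_def is_graph_def sym_def)
        ultimately obtain x' y' where x': "x' \<in> nbrs G x" "f x' = p" and y': "y' \<in> nbrs G y" "f y' = p"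
          using lift by metis
        have "x' \<in> fst G" "y' \<in> fst G" using x' y' nbrs_subset[OF G] by auto
        then have "x' = y'" using step.IH x' y' by blast
        then have "x \<in> nbrs G x'" "y \<in> nbrs G x'"
          using x' y' G by (auto simp: nbrs_def is_graph_def sym_def)
        moreover have "inj_on f (nbrs G x')"
          using f \<open>x' \<in> fst G\<close> by (simp add: graph_covering_def bij_betw_def)
        ultimately show "x = y" using \<open>f x = q\<close> \<open>f y = q\<close> by (auto dest: inj_onD)
      qed
    qed (use fibre in blast)
  qed
  then show ?thesis using f by (auto simp: graph_covering_def intro!: inj_onI)
qed

lemma graph_covering_inj_iso_map:
  assumes G: "is_graph G" and H: "connected_graph H" and f: "graph_covering f G H"
    and inj: "inj_on f (fst G)"
  shows "iso_map f G H"
proof -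
  obtain u0 where "u0 \<in> fst G" using G by (auto simp: is_graph_def)
  then have "bij_betw f (fst G) (fst H)"
    using graph_covering_surj[OF G H f] inj by (simp add: bij_betw_def)
  moreover have "(u, w) \<in> snd G \<longleftrightarrow> (f u, f w) \<in> snd H" if "u \<in> fst G" "w \<in> fst G" for u w
  proof -
    have "f ` nbrs G u = nbrs H (f u)" using f that(1) by (simp add: graph_covering_def bij_betw_def)
    then have "(f u, f w) \<in> snd H \<longleftrightarrow> f w \<in> f ` nbrs G u" by (simp add: nbrs_def)
    also have "\<dots> \<longleftrightarrow> w \<in> nbrs G u"
      using inj_on_image_mem_iff[OF inj that(2) nbrs_subset[OF G]] .
    finally show ?thesis by (simp add: nbrs_def)
  qed
  ultimately show ?thesis by (simp add: iso_map_def)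
qed

section \<open>Self-delimiting binary codes\<close>

definition bin :: "nat \<Rightarrow> nat \<Rightarrow> bool list" where
  "bin w x = map (bit x) [0..<w]"

lemma length_bin [simp]: "length (bin w x) = w"
  by (simp add: bin_def)

lemma bin_inject:
  assumes "x < 2 ^ w" "y < 2 ^ w" "bin w x = bin w y"
  shows "x = y"
proof -
  have "take_bit w x = take_bit w y"
    using assms(3) unfolding bin_def by (metis horner_sum_bit_eq_take_bit)
  then show ?thesis using assms(1,2) by (simp add: take_bit_nat_eq_self)
qed

definition prefix_code :: "nat \<Rightarrow> bool list" where
  "prefix_code x = replicate (floorlog 2 x) True @ False # bin (floorlog 2 x) x"

lemma length_prefix_code: "length (prefix_code x) = 2 * floorlog 2 x + 1"
  by (simp add: prefix_code_def)

lemma less_two_power_floorlog: "x < 2 ^ floorlog 2 x"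
  using floorlog_leD[of 2 x "floorlog 2 x"] by simp

lemma replicate_True_False_inject:
  "replicate a True @ False # xs = replicate b True @ False # ys \<Longrightarrow> a = b \<and> xs = ys"
proof (induction a arbitrary: b)
  case 0 then show ?case by (cases b) auto
next
  case (Suc a) then show ?case by (cases b) auto
qed

lemma prefix_code_append_inject:
  assumes "prefix_code x @ xs = prefix_code y @ ys"
  shows "x = y \<and> xs = ys"
proof -
  have "replicate (floorlog 2 x) True @ False # (bin (floorlog 2 x) x @ xs) =
      replicate (floorlog 2 y) True @ False # (bin (floorlog 2 y) y @ ys)"
    using assms by (simp add: prefix_code_def)
  then have fl: "floorlog 2 x = floorlog 2 y" and "bin (floorlog 2 x) x @ xs = bin (floorlog 2 y) y @ ys"
    by (blast dest: replicate_True_False_inject)+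
  then have "bin (floorlog 2 x) x = bin (floorlog 2 x) y" and "xs = ys"
    by simp_all
  moreover have "x = y"
    using bin_inject[of x "floorlog 2 x" y] less_two_power_floorlog[of x] less_two_power_floorlog[of y] fl
      calculation(1) by simp
  ultimately show ?thesis by simp
qed

lemma floorlog_two_le_log: "0 < x \<Longrightarrow> real (floorlog 2 x) \<le> log 2 x + 1"
  by (simp add: floorlog_def)

section \<open>The proof labeling scheme\<close>

datatype label = Label (lab_size: nat) (lab_class: nat) (lab_root: nat) (lab_pos: nat)

definition lab_global :: "label \<Rightarrow> nat \<times> nat \<times> nat" where
  "lab_global L = (lab_size L, lab_class L, lab_root L)"

definition valid_label :: "graph set \<Rightarrow> label \<Rightarrow> bool" where
  "valid_label C L \<longleftrightarrow> lab_class L < num_iso_classes C (lab_size L) \<and> lab_pos L < lab_size L"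

text \<open>Only the class index is written with the fixed width \<open>\<lceil>log |C_n|\<rceil>\<close>, known once \<open>n\<close>
  has been read; the other fields are self-delimiting and cost \<open>O(log n)\<close> bits each.\<close>

definition encode :: "graph set \<Rightarrow> label \<Rightarrow> bool list" where
  "encode C L = prefix_code (lab_size L) @ prefix_code (lab_root L) @ prefix_code (lab_pos L) @
     bin (ceillog2 (num_iso_classes C (lab_size L))) (lab_class L)"

text \<open>\<open>decode\<close> is meaningful only on the image of \<open>encode\<close>, which the verifier checks.\<close>

definition decode :: "graph set \<Rightarrow> bool list \<Rightarrow> label" where
  "decode C = inv_into (Collect (valid_label C)) (encode C)"

lemma length_encode:
  "length (encode C (Label n j r p)) =
     2 * floorlog 2 n + 2 * floorlog 2 r + 2 * floorlog 2 p + 3 + ceillog2 (num_iso_classes C n)"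
  by (simp add: encode_def length_prefix_code)

lemma inj_on_encode: "inj_on (encode C) (Collect (valid_label C))"
proof (rule inj_onI)
  fix L L' assume L: "L \<in> Collect (valid_label C)" and L': "L' \<in> Collect (valid_label C)"
    and eq: "encode C L = encode C L'"
  obtain n j r p n' j' r' p' where [simp]: "L = Label n j r p" "L' = Label n' j' r' p'"
    by (cases L, cases L') blast
  from eq have [simp]: "n' = n" "r' = r" "p' = p"
    and "bin (ceillog2 (num_iso_classes C n)) j = bin (ceillog2 (num_iso_classes C n)) j'"
    by (auto simp: encode_def dest!: prefix_code_append_inject)
  moreover have "j < 2 ^ ceillog2 (num_iso_classes C n)" "j' < 2 ^ ceillog2 (num_iso_classes C n)"
    using L L' le_two_power_ceillog2[of "num_iso_classes C n"] by (auto simp: valid_label_def)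
  ultimately show "L = L'" using bin_inject by simp
qed

lemma decode_encode: "valid_label C L \<Longrightarrow> decode C (encode C L) = L"
  unfolding decode_def by (simp add: inj_on_encode)

lemma valid_decode: "w \<in> encode C ` Collect (valid_label C) \<Longrightarrow> valid_label C (decode C w)"
  by (auto simp: decode_encode)

definition cert_verifier :: "graph set \<Rightarrow> verifier" where
  "cert_verifier C G P v \<longleftrightarrow>
     (\<forall>u\<in>closed_nbhd G v. P u \<in> encode C ` Collect (valid_label C) \<and>
        lab_global (decode C (P u)) = lab_global (decode C (P v))) \<and>
     (lab_pos (decode C (P v)) = 0 \<longrightarrow> v = lab_root (decode C (P v))) \<and>
     bij_betw (\<lambda>u. lab_pos (decode C (P u))) (closed_nbhd G v - {v})
       (nbrs (class_rep C (lab_size (decode C (P v))) (lab_class (decode C (P v)))) (lab_pos (decode C (P v))))"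

lemma cert_verifier_cong:
  assumes PQ: "\<forall>u\<in>closed_nbhd G v. P u = Q u"
  shows "cert_verifier C G P v = cert_verifier C G Q v"
proof -
  have Pv: "P v = Q v" using PQ by (simp add: closed_nbhd_def)
  have "(\<forall>u\<in>closed_nbhd G v. P u \<in> encode C ` Collect (valid_label C) \<and>
        lab_global (decode C (P u)) = lab_global (decode C (P v))) \<longleftrightarrow>
      (\<forall>u\<in>closed_nbhd G v. Q u \<in> encode C ` Collect (valid_label C) \<and>
        lab_global (decode C (Q u)) = lab_global (decode C (Q v)))"
    by (rule ball_cong) (simp_all add: PQ Pv)
  moreover have "bij_betw (\<lambda>u. lab_pos (decode C (P u))) (closed_nbhd G v - {v}) B \<longleftrightarrow>
      bij_betw (\<lambda>u. lab_pos (decode C (Q u))) (closed_nbhd G v - {v}) B" for B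
    by (rule bij_betw_cong) (simp add: PQ)
  ultimately show ?thesis by (simp only: cert_verifier_def Pv)
qed

lemma local_cert_verifier: "local_verifier (cert_verifier C)"
  unfolding local_verifier_def
proof (intro allI impI)
  fix G H :: graph and P Q :: certs and v
  assume N: "closed_nbhd G v = closed_nbhd H v" and PQ: "\<forall>u\<in>closed_nbhd G v. P u = Q u"
  have "cert_verifier C G P v = cert_verifier C G Q v" using PQ by (rule cert_verifier_cong)
  also have "\<dots> = cert_verifier C H Q v" by (simp only: cert_verifier_def N)
  finally show "cert_verifier C G P v = cert_verifier C H Q v" .
qed

definition canonical_iso :: "graph set \<Rightarrow> graph \<Rightarrow> nat \<times> (nat \<Rightarrow> nat)" where
  "canonical_iso C G = (SOME (j, g). j < num_iso_classes C (card (fst G)) \<and>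
     iso_map g G (class_rep C (card (fst G)) j))"

lemma canonical_iso:
  assumes "graph_class C" "G \<in> C" "canonical_iso C G = (j, g)"
  shows "j < num_iso_classes C (card (fst G))" and "iso_map g G (class_rep C (card (fst G)) j)"
proof -
  have "\<exists>p. case p of (j, g) \<Rightarrow> j < num_iso_classes C (card (fst G)) \<and>
      iso_map g G (class_rep C (card (fst G)) j)"
    using ex_graph_iso_class_rep[OF assms(1,2)] by (auto simp: graph_iso_iff_iso_map)
  then have "case canonical_iso C G of (j, g) \<Rightarrow> j < num_iso_classes C (card (fst G)) \<and>
      iso_map g G (class_rep C (card (fst G)) j)"
    unfolding canonical_iso_def by (rule someI_ex)
  then show "j < num_iso_classes C (card (fst G))" and "iso_map g G (class_rep C (card (fst G)) j)"
    using assms(3) by simp_all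
qed

definition cert_prover :: "graph set \<Rightarrow> prover" where
  "cert_prover C G u = (case canonical_iso C G of (j, g) \<Rightarrow>
     encode C (Label (card (fst G)) j (inv_into (fst G) g 0) (g u)))"

lemma decode_cert_prover:
  assumes C: "graph_class C" and G: "G \<in> C" and jg: "canonical_iso C G = (j, g)"
    and u: "u \<in> fst G"
  shows "cert_prover C G u \<in> encode C ` Collect (valid_label C)"
    and "decode C (cert_prover C G u) = Label (card (fst G)) j (inv_into (fst G) g 0) (g u)"
proof -
  have "g u \<in> fst (class_rep C (card (fst G)) j)"
    using canonical_iso[OF C G jg] u by (auto simp: iso_map_def bij_betw_def)
  then have "valid_label C (Label (card (fst G)) j (inv_into (fst G) g 0) (g u))"
    using canonical_iso(1)[OF C G jg] class_rep(2)[OF C] by (simp add: valid_label_def)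
  then show "cert_prover C G u \<in> encode C ` Collect (valid_label C)"
    and "decode C (cert_prover C G u) = Label (card (fst G)) j (inv_into (fst G) g 0) (g u)"
    using jg by (simp_all add: cert_prover_def decode_encode)
qed

lemma cert_verifier_accepts_prover:
  assumes C: "graph_class C" and G: "G \<in> C" and v: "v \<in> fst G"
  shows "cert_verifier C G (cert_prover C G) v"
proof -
  let ?n = "card (fst G)"
  obtain j g where jg: "canonical_iso C G = (j, g)" by fastforce
  define H where "H = class_rep C ?n j"
  define r where "r = inv_into (fst G) g 0"
  note dec = decode_cert_prover[OF C G jg, folded r_def]
  have j: "j < num_iso_classes C ?n" and g: "iso_map g G H"
    using canonical_iso[OF C G jg] by (simp_all add: H_def)
  have ig: "is_graph G" using graph_class_is_graph[OF C G] .
  have iH: "is_graph H" using graph_class_is_graph[OF C] class_rep(1)[OF C j] by (simp add: H_def)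
  have "bij_betw g (nbrs G v) (nbrs H (g v))"
    using iso_map_imp_graph_covering[OF ig iH g] v by (simp add: graph_covering_def)
  moreover have "bij_betw (\<lambda>u. lab_pos (decode C (cert_prover C G u))) (nbrs G v) (nbrs H (g v)) =
      bij_betw g (nbrs G v) (nbrs H (g v))"
    by (rule bij_betw_cong) (use dec(2) nbrs_subset[OF ig] in fastforce)
  ultimately have "bij_betw (\<lambda>u. lab_pos (decode C (cert_prover C G u))) (closed_nbhd G v - {v})
      (nbrs H (g v))"
    using closed_nbhd_minus_self[OF ig] by simp
  moreover have "g v = 0 \<longrightarrow> v = r"
    using g v by (metis iso_map_def bij_betw_def inv_into_f_f r_def)
  ultimately show ?thesis
    unfolding cert_verifier_def
  proof (intro conjI ballI)
    fix u assume "u \<in> closed_nbhd G v"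
    then have u: "u \<in> fst G" using closed_nbhd_subset[OF ig v] by blast
    show "cert_prover C G u \<in> encode C ` Collect (valid_label C)" using dec(1)[OF u] .
    show "lab_global (decode C (cert_prover C G u)) = lab_global (decode C (cert_prover C G v))"
      using dec(2)[OF u] dec(2)[OF v] by (simp add: lab_global_def)
  qed (use dec(2)[OF v] in \<open>simp_all add: H_def\<close>)
qed

lemma accepted_labels_covering:
  assumes C: "graph_class C" and G: "connected_graph G"
    and acc: "\<forall>v\<in>fst G. cert_verifier C G P v"
  shows "\<exists>n j r. j < num_iso_classes C n \<and> 0 < n \<and>
    graph_covering (\<lambda>u. lab_pos (decode C (P u))) G (class_rep C n j) \<and>
    (\<forall>x\<in>fst G. lab_pos (decode C (P x)) = 0 \<longrightarrow> x = r)"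
proof -
  have ig: "is_graph G" using G by (simp add: connected_graph_def)
  obtain v0 where v0: "v0 \<in> fst G" using ig by (auto simp: is_graph_def)
  define L where "L u = decode C (P u)" for u
  have accL: "(\<forall>w\<in>closed_nbhd G u. P w \<in> encode C ` Collect (valid_label C) \<and>
        lab_global (L w) = lab_global (L u)) \<and>
      (lab_pos (L u) = 0 \<longrightarrow> u = lab_root (L u)) \<and>
      bij_betw (\<lambda>w. lab_pos (L w)) (nbrs G u) (nbrs (class_rep C (lab_size (L u)) (lab_class (L u))) (lab_pos (L u)))"
    if "u \<in> fst G" for u
    using acc[rule_format, OF that] closed_nbhd_minus_self[OF ig, of u]
    by (simp add: cert_verifier_def L_def)
  have valid: "valid_label C (L u)" if "u \<in> fst G" for u
    using accL[OF that] valid_decode by (auto simp: L_def closed_nbhd_def)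
  have global: "lab_global (L u) = lab_global (L v0)" if "u \<in> fst G" for u
  proof (rule connected_graph_const[OF G _ v0 that])
    fix a b assume ab: "(a, b) \<in> snd G"
    then have "a \<in> fst G" "b \<in> closed_nbhd G a" using ig by (auto simp: is_graph_def closed_nbhd_def)
    then show "lab_global (L b) = lab_global (L a)" using accL by blast
  qed
  obtain n j r p0 where L0: "L v0 = Label n j r p0" by (cases "L v0")
  have size_class: "lab_size (L u) = n" "lab_class (L u) = j" and root: "lab_root (L u) = r"
    if "u \<in> fst G" for u
    using global[OF that] L0 by (simp_all add: lab_global_def)
  have j: "j < num_iso_classes C n" and n: "0 < n"
    using valid[OF v0] L0 by (simp_all add: valid_label_def)
  moreover have "graph_covering (\<lambda>u. lab_pos (L u)) G (class_rep C n j)"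
    unfolding graph_covering_def
  proof (intro conjI ballI)
    show "(\<lambda>u. lab_pos (L u)) ` fst G \<subseteq> fst (class_rep C n j)"
      using valid size_class class_rep(2)[OF C j] by (auto simp: valid_label_def)
    fix u assume u: "u \<in> fst G"
    show "bij_betw (\<lambda>u. lab_pos (L u)) (nbrs G u) (nbrs (class_rep C n j) (lab_pos (L u)))"
      using conjunct2[OF conjunct2[OF accL[OF u]]] size_class[OF u] by simp
  qed
  moreover have "\<forall>x\<in>fst G. lab_pos (L x) = 0 \<longrightarrow> x = r"
    using accL root by simp
  ultimately show ?thesis unfolding L_def by blast
qed

lemma cert_verifier_sound:
  assumes C: "graph_class C" and G: "connected_graph G"
    and acc: "\<forall>v\<in>fst G. cert_verifier C G P v"
  shows "G \<in> C"
proof -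
  have ig: "is_graph G" using G by (simp add: connected_graph_def)
  obtain n j r where j: "j < num_iso_classes C n" and "0 < n"
    and cov: "graph_covering (\<lambda>u. lab_pos (decode C (P u))) G (class_rep C n j)"
    and root: "\<forall>x\<in>fst G. lab_pos (decode C (P x)) = 0 \<longrightarrow> x = r"
    using accepted_labels_covering[OF assms] by blast
  define H where "H = class_rep C n j"
  have H: "H \<in> C" "0 \<in> fst H" and cH: "connected_graph H"
    using class_rep[OF C j] graph_class_connected[OF C] \<open>0 < n\<close> by (auto simp: H_def)
  have "inj_on (\<lambda>u. lab_pos (decode C (P u))) (fst G)"
  proof (rule graph_covering_inj[OF ig cH cov[folded H_def] H(2)])
    fix x y assume "x \<in> fst G" "y \<in> fst G"
      and "lab_pos (decode C (P x)) = 0" "lab_pos (decode C (P y)) = 0"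
    then show "x = y" using root by blast
  qed
  then have "iso_map (\<lambda>u. lab_pos (decode C (P u))) G H"
    by (rule graph_covering_inj_iso_map[OF ig cH cov[folded H_def]])
  then have "graph_iso H G" using graph_iso_sym graph_iso_iff_iso_map by blast
  then show ?thesis using graph_class_iso_closed[OF C H(1) ig] by blast
qed

lemma length_cert_prover:
  assumes C: "graph_class C" and G: "G \<in> C" and ids: "ids_ok d G" and v: "v \<in> fst G"
  shows "real (length (cert_prover C G v)) \<le>
    log 2 (num_iso_classes C (card (fst G))) + real (2 * d + 4) * log 2 (card (fst G)) + 10"
proof -
  let ?n = "card (fst G)"
  let ?N = "num_iso_classes C ?n"
  obtain j g where jg: "canonical_iso C G = (j, g)" by fastforce
  define r where "r = inv_into (fst G) g 0"
  have n: "0 < ?n" using card_vertices_pos[OF graph_class_is_graph[OF C G]] .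
  have bij: "bij_betw g (fst G) {0..<?n}"
    using canonical_iso[OF C G jg] class_rep(2)[OF C] by (simp add: iso_map_def)
  then have "r \<in> fst G" using n by (simp add: r_def bij_betw_def inv_into_into)
  then have r: "1 \<le> r" "r \<le> ?n ^ d" using ids by (auto simp: ids_ok_def)
  have "g v < ?n" using bij v by (auto simp: bij_betw_def)
  have log_n: "real (floorlog 2 ?n) \<le> log 2 ?n + 1"
    using n by (rule floorlog_two_le_log)
  moreover have "real (floorlog 2 (g v)) \<le> log 2 ?n + 1"
    using floorlog_mono[of "g v" ?n 2] \<open>g v < ?n\<close> log_n by simp
  moreover have "real (floorlog 2 r) \<le> d * log 2 ?n + 1"
  proof -
    have "real r \<le> real ?n ^ d" using r(2) by (metis of_nat_le_iff of_nat_power)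
    then have "log 2 r \<le> log 2 (?n ^ d)" using r(1) by (intro log_mono) auto
    then show ?thesis using floorlog_two_le_log[of r] r n by (simp add: log_nat_power)
  qed
  moreover have "real (ceillog2 ?N) \<le> log 2 ?N + 1"
    using ceillog2_less_log[OF num_iso_classes_pos[OF C G]] by simp
  moreover have "length (cert_prover C G v) =
      2 * floorlog 2 ?n + 2 * floorlog 2 r + 2 * floorlog 2 (g v) + 3 + ceillog2 ?N"
    using jg by (simp add: cert_prover_def length_encode r_def)
  ultimately show ?thesis by (simp add: algebra_simps)
qed

lemma log_affine_le_linear:
  fixes a b c :: real and n N :: nat
  assumes "0 < c" "1 \<le> n" "1 \<le> N" "real N \<le> c ^ n" "0 \<le> a" "0 \<le> b"
  shows "log 2 N + a * log 2 n + b \<le> (max (log 2 c) 0 + a + b) * n"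
proof -
  have "log 2 N \<le> log 2 (c ^ n)" using assms(1,3,4) by simp
  also have "\<dots> = n * log 2 c" using assms(1) by (simp add: log_nat_power)
  also have "\<dots> \<le> n * max (log 2 c) 0" by (intro mult_left_mono) auto
  finally have "log 2 N \<le> n * max (log 2 c) 0" .
  moreover have "log 2 n \<le> n"
    using log2_of_power_le[of n n] assms(2) by (simp add: less_imp_le)
  then have "a * log 2 n \<le> a * n" using assms(5) by (rule mult_left_mono)
  moreover have "b \<le> b * n" using assms(2,6) by (simp add: mult_le_cancel_left1)
  ultimately show ?thesis by (simp add: algebra_simps)
qed

lemma cert_pls:
  assumes "graph_class C"
  shows "pls d C (cert_prover C) (cert_verifier C)"
  unfolding pls_def
  using local_cert_verifier cert_verifier_accepts_prover[OF assms] cert_verifier_sound[OF assms]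
  by blast

lemma cert_pls_size_log:
  assumes C: "graph_class C"
  shows "pls_size_bounded d C (cert_prover C)
    (\<lambda>n. log 2 (num_iso_classes C n) + real (2 * d + 10) * log 2 n + real (2 * d + 10))"
  unfolding pls_size_bounded_def
proof (intro allI impI ballI)
  fix G v assume G: "connected_graph G" "ids_ok d G" "G \<in> C" and v: "v \<in> fst G"
  let ?n = "card (fst G)"
  have "0 \<le> log 2 ?n" using card_vertices_pos[OF graph_class_is_graph[OF C G(3)]] by simp
  then have "real (2 * d + 4) * log 2 ?n + 10 \<le> real (2 * d + 10) * log 2 ?n + real (2 * d + 10)"
    by (intro add_mono mult_right_mono) auto
  then show "real (length (cert_prover C G v)) \<le>
      log 2 (num_iso_classes C ?n) + real (2 * d + 10) * log 2 ?n + real (2 * d + 10)"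
    using length_cert_prover[OF C G(3,2) v] by linarith
qed

lemma cert_pls_size_linear:
  assumes C: "graph_class C" and "tiny C"
  shows "\<exists>K. pls_size_bounded d C (cert_prover C) (\<lambda>n. K * real n)"
proof -
  obtain c :: real where c: "0 < c" "\<forall>n\<ge>1. real (num_iso_classes C n) \<le> c ^ n"
    using assms(2) by (auto simp: tiny_def)
  have "pls_size_bounded d C (cert_prover C) (\<lambda>n. (max (log 2 c) 0 + real (2 * d + 4) + 10) * real n)"
    unfolding pls_size_bounded_def
  proof (intro allI impI ballI)
    fix G v assume G: "connected_graph G" "ids_ok d G" "G \<in> C" and v: "v \<in> fst G"
    let ?n = "card (fst G)"
    have "1 \<le> ?n" "1 \<le> num_iso_classes C ?n"
      using card_vertices_pos[OF graph_class_is_graph[OF C G(3)]] num_iso_classes_pos[OF C G(3)]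
      by auto
    then show "real (length (cert_prover C G v)) \<le> (max (log 2 c) 0 + real (2 * d + 4) + 10) * real ?n"
      using length_cert_prover[OF C G(3,2) v] c
        log_affine_le_linear[of c ?n "num_iso_classes C ?n" "real (2 * d + 4)" 10]
      by force
  qed
  then show ?thesis by blast
qed

theorem theorem3p1:
  fixes C :: "graph set" and d :: nat
  assumes "graph_class C" and "d \<ge> 1"
  shows "(\<exists>Pr A K. pls d C Pr A \<and>
            pls_size_bounded d C Pr (\<lambda>n. log 2 (num_iso_classes C n) + K * log 2 n + K))
       \<and> (tiny C \<longrightarrow> (\<exists>Pr A K. pls d C Pr A \<and> pls_size_bounded d C Pr (\<lambda>n. K * real n)))"
  \<comment> \<open>The scheme works for every exponent \<open>d\<close>.\<close>
  using cert_pls[OF assms(1)] cert_pls_size_log[OF assms(1)] cert_pls_size_linear[OF assms(1)]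
  by blast

end
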